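(* Let $q$ be a prime power and $k,m,n,h,r$ positive integers. If $U$ is an $(h,r)_q$-evasive $[n,k]_{q^m/q}$ system with $r<hm$, then $U$ is $(2h,\,r+hm-1)_q$-evasive, i.e. every $\mathbb F_{q^m}$-subspace $H$ of $\mathbb F_{q^m}^k$ with $\dim_{\mathbb F_{q^m}}(H)=2h$ satisfies $\dim_{\mathbb F_q}(U\cap H)\le r+hm-1$.
   Context: An $[n,k]_{q^m/q}$ system is an $\mathbb F_q$-subspace $U$ of $\mathbb F_{q^m}^k$ with $\dim_{\mathbb F_q}(U)=n$ and $\langle U\rangle_{\mathbb F_{q^m}}=\mathbb F_{q^m}^k$. For positive integers $h<k$ and $r$, $U$ is called $(h,r)_q$-evasive if $\dim_{\mathbb F_q}(U\cap H)\le r$ for every $\mathbb F_{q^m}$-subspace $H$ of $\mathbb F_{q^m}^k$ with $\dim_{\mathbb F_{q^m}}(H)=h$. *)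

theory Defs
  imports "HOL-Analysis.Analysis"
begin

text \<open>The field F_{q^m} is a finite field type 'a; F_q is a subfield K of it.
  Vectors of F_{q^m}^k are elements of 'a^'k with CARD('k) = k.
  F_{q^m}-subspaces and F_{q^m}-dimension are the library notions vec.subspace / vec.dim.\<close>

definition is_subfield :: "'a::field set \<Rightarrow> bool" where
  "is_subfield K \<longleftrightarrow> 0 \<in> K \<and> 1 \<in> K \<and>
     (\<forall>x\<in>K. \<forall>y\<in>K. x + y \<in> K \<and> x * y \<in> K) \<and>
     (\<forall>x\<in>K. - x \<in> K) \<and> (\<forall>x\<in>K. x \<noteq> 0 \<longrightarrow> inverse x \<in> K)"

definition is_prime_power :: "nat \<Rightarrow> bool" where
  "is_prime_power q \<longleftrightarrow> (\<exists>p e. prime p \<and> e > 0 \<and> q = p ^ e)"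

definition Ksubspace :: "'a::field set \<Rightarrow> ('a ^ 'k) set \<Rightarrow> bool" where
  "Ksubspace K U \<longleftrightarrow> 0 \<in> U \<and> (\<forall>x\<in>U. \<forall>y\<in>U. x + y \<in> U) \<and>
     (\<forall>c\<in>K. \<forall>x\<in>U. c *s x \<in> U)"

definition Kindep :: "'a::field set \<Rightarrow> ('a ^ 'k) set \<Rightarrow> bool" where
  "Kindep K B \<longleftrightarrow> (\<forall>T c. finite T \<longrightarrow> T \<subseteq> B \<longrightarrow> (\<forall>v\<in>T. c v \<in> K) \<longrightarrow>
       (\<Sum>v\<in>T. c v *s v) = 0 \<longrightarrow> (\<forall>v\<in>T. c v = 0))"

definition Kdim :: "'a::field set \<Rightarrow> ('a ^ 'k) set \<Rightarrow> nat" where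
  "Kdim K U = Max (card ` {B. B \<subseteq> U \<and> Kindep K B})"

definition is_system :: "'a::field set \<Rightarrow> nat \<Rightarrow> ('a ^ 'k) set \<Rightarrow> bool" where
  "is_system K n U \<longleftrightarrow> Ksubspace K U \<and> Kdim K U = n \<and> vec.span U = UNIV"

text \<open>(h,r)_q-evasive (the standing requirement h < k is imposed separately).\<close>
definition evasive :: "'a::field set \<Rightarrow> nat \<Rightarrow> nat \<Rightarrow> ('a ^ 'k) set \<Rightarrow> bool" where
  "evasive K h r U \<longleftrightarrow>
     (\<forall>H. vec.subspace H \<longrightarrow> vec.dim H = h \<longrightarrow> Kdim K (U \<inter> H) \<le> r)"

end

theory Submission
  imports Defs
begin

text \<open>Put W = U \<inter> H, so that dim_q H = 2hm, and suppose dim_q W \<ge> r + hm. Enlarge W inside H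
  to an F_q-subspace V of dimension max (dim_q W) (2hm - h). The vectors x \<in> H with
  F_{q^m} x \<subseteq> V form an F_{q^m}-subspace M \<subseteq> V. As F_{q^m} is spanned over F_q by m elements
  \<lambda>_i, M is the intersection of the m preimages of V under x \<mapsto> \<lambda>_i x, each of codimension at
  most h in H; hence dim_q M \<ge> hm and M contains an h-dimensional F_{q^m}-subspace H'. Since W and
  H' both lie in V, dim_q (W \<inter> H') \<ge> dim_q W + hm - dim_q V > r, contradicting evasiveness.\<close>

lemma subfield_zero: "is_subfield K \<Longrightarrow> 0 \<in> K"
  unfolding is_subfield_def by simp

lemma subfield_one: "is_subfield K \<Longrightarrow> 1 \<in> K"
  unfolding is_subfield_def by simp

lemma subfield_add: "is_subfield K \<Longrightarrow> x \<in> K \<Longrightarrow> y \<in> K \<Longrightarrow> x + y \<in> K"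
  unfolding is_subfield_def by simp

lemma subfield_mult: "is_subfield K \<Longrightarrow> x \<in> K \<Longrightarrow> y \<in> K \<Longrightarrow> x * y \<in> K"
  unfolding is_subfield_def by simp

lemma subfield_uminus: "is_subfield K \<Longrightarrow> x \<in> K \<Longrightarrow> - x \<in> K"
  unfolding is_subfield_def by simp

lemma subfield_diff: "is_subfield K \<Longrightarrow> x \<in> K \<Longrightarrow> y \<in> K \<Longrightarrow> x - y \<in> K"
  unfolding is_subfield_def by (metis diff_conv_add_uminus)

lemma subfield_divide: "is_subfield K \<Longrightarrow> x \<in> K \<Longrightarrow> y \<in> K \<Longrightarrow> x / y \<in> K"
  unfolding is_subfield_def by (cases "y = 0") (auto simp: divide_inverse)

lemma card_subfield_ge_two:
  fixes K :: "'a::{field,finite} set"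
  assumes "is_subfield K"
  shows "2 \<le> card K"
proof -
  have "card {0, 1 :: 'a} \<le> card K"
    using assms by (intro card_mono) (auto simp: subfield_zero subfield_one)
  then show ?thesis by simp
qed

lemma subspace_imp_Ksubspace: "vec.subspace S \<Longrightarrow> Ksubspace K S"
  unfolding Ksubspace_def vec.subspace_def by simp

lemma Ksubspace_Int: "Ksubspace K A \<Longrightarrow> Ksubspace K B \<Longrightarrow> Ksubspace K (A \<inter> B)"
  unfolding Ksubspace_def by simp

lemma Ksubspace_add: "Ksubspace K V \<Longrightarrow> x \<in> V \<Longrightarrow> y \<in> V \<Longrightarrow> x + y \<in> V"
  unfolding Ksubspace_def by blast

lemma Ksubspace_diff:
  assumes "is_subfield K" "Ksubspace K V" "x \<in> V" "y \<in> V"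
  shows "x - y \<in> V"
proof -
  have "- 1 \<in> K" using assms(1) unfolding is_subfield_def by simp
  then have "x + (- 1) *s y \<in> V" using assms(2-4) unfolding Ksubspace_def by blast
  then show ?thesis by simp
qed

lemma Ksubspace_sum:
  assumes "Ksubspace K V" "\<And>i. i \<in> I \<Longrightarrow> c i \<in> K" "\<And>i. i \<in> I \<Longrightarrow> v i \<in> V"
  shows "(\<Sum>i\<in>I. c i *s v i) \<in> V"
  using assms(2,3)
  by (induction I rule: infinite_finite_induct) (use assms(1) in \<open>auto simp: Ksubspace_def\<close>)

definition Kspan :: "'a::field set \<Rightarrow> ('a ^ 'k) set \<Rightarrow> ('a ^ 'k) set" where
  "Kspan K B = (\<lambda>c. \<Sum>v\<in>B. c v *s v) ` (B \<rightarrow>\<^sub>E K)"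

lemma Kspan_iff: "x \<in> Kspan K B \<longleftrightarrow> (\<exists>c. (\<forall>v\<in>B. c v \<in> K) \<and> x = (\<Sum>v\<in>B. c v *s v))"
proof
  assume "x \<in> Kspan K B"
  then show "\<exists>c. (\<forall>v\<in>B. c v \<in> K) \<and> x = (\<Sum>v\<in>B. c v *s v)"
    unfolding Kspan_def by (auto simp: PiE_iff)
next
  assume "\<exists>c. (\<forall>v\<in>B. c v \<in> K) \<and> x = (\<Sum>v\<in>B. c v *s v)"
  then obtain c where c: "\<forall>v\<in>B. c v \<in> K" "x = (\<Sum>v\<in>B. c v *s v)" by blast
  then have "x = (\<Sum>v\<in>B. restrict c B v *s v)" by simp
  with c(1) show "x \<in> Kspan K B"
    unfolding Kspan_def by (intro image_eqI[where x = "restrict c B"]) auto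
qed

lemma KspanI: "x = (\<Sum>v\<in>B. c v *s v) \<Longrightarrow> \<forall>v\<in>B. c v \<in> K \<Longrightarrow> x \<in> Kspan K B"
  unfolding Kspan_iff by blast

lemma Kspan_subset: "Ksubspace K X \<Longrightarrow> B \<subseteq> X \<Longrightarrow> Kspan K B \<subseteq> X"
  by (auto simp: Kspan_iff intro!: Ksubspace_sum)

lemma Kspan_superset:
  assumes "is_subfield K" "finite B"
  shows "B \<subseteq> Kspan K B"
proof
  fix v assume v: "v \<in> B"
  let ?c = "\<lambda>w. if w = v then 1 else 0"
  have "v = (\<Sum>w\<in>B. ?c w *s w)"
    using assms(2) v by (simp add: if_distrib[of "\<lambda>c. c *s _"] sum.delta cong: if_cong)
  moreover have "\<forall>w\<in>B. ?c w \<in> K"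
    using assms(1) by (simp add: subfield_zero subfield_one)
  ultimately show "v \<in> Kspan K B" by (rule KspanI)
qed

lemma KindepD:
  "Kindep K B \<Longrightarrow> finite B \<Longrightarrow> \<forall>v\<in>B. c v \<in> K \<Longrightarrow> (\<Sum>v\<in>B. c v *s v) = 0 \<Longrightarrow> v \<in> B
    \<Longrightarrow> c v = 0"
  unfolding Kindep_def by blast

lemma KindepI:
  assumes "0 \<in> K" "finite B"
    and indep: "\<And>c. \<forall>v\<in>B. c v \<in> K \<Longrightarrow> (\<Sum>v\<in>B. c v *s v) = 0 \<Longrightarrow> \<forall>v\<in>B. c v = 0"
  shows "Kindep K B"
  unfolding Kindep_def
proof (intro allI impI)
  fix T c assume T: "finite T" "T \<subseteq> B" "\<forall>v\<in>T. c v \<in> K" "(\<Sum>v\<in>T. c v *s v) = 0"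
  let ?c = "\<lambda>v. if v \<in> T then c v else 0"
  have "(\<Sum>v\<in>B. ?c v *s v) = (\<Sum>v\<in>T. c v *s v)"
    using T(2) assms(2) by (auto intro!: sum.mono_neutral_cong_right)
  with T(4) have "(\<Sum>v\<in>B. ?c v *s v) = 0" by simp
  moreover have "\<forall>v\<in>B. ?c v \<in> K" using T(3) assms(1) by simp
  ultimately have "\<forall>v\<in>B. ?c v = 0" using indep[of ?c] by blast
  then show "\<forall>v\<in>T. c v = 0" using T(2) by (metis subsetD)
qed

lemma inj_on_Kcombination:
  assumes "is_subfield K" "finite B" "Kindep K B"
  shows "inj_on (\<lambda>c. \<Sum>v\<in>B. c v *s v) (B \<rightarrow>\<^sub>E K)"
proof (rule inj_onI)
  fix c c' assume c: "c \<in> B \<rightarrow>\<^sub>E K" "c' \<in> B \<rightarrow>\<^sub>E K"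
    and eq: "(\<Sum>v\<in>B. c v *s v) = (\<Sum>v\<in>B. c' v *s v)"
  have "(\<Sum>v\<in>B. (c v - c' v) *s v) = 0"
    using eq by (simp add: vec.scale_left_diff_distrib sum_subtractf)
  moreover have "\<forall>v\<in>B. c v - c' v \<in> K"
    using c assms(1) by (auto simp: PiE_iff subfield_diff)
  ultimately have "\<forall>v\<in>B. c v - c' v = 0"
    using KindepD[OF assms(3,2), of "\<lambda>v. c v - c' v"] by blast
  then show "c = c'" using c by (intro PiE_ext) auto
qed

lemma Kindep_insert:
  assumes K: "is_subfield K" and B: "finite B" "Kindep K B" and x: "x \<notin> Kspan K B"
  shows "Kindep K (insert x B)"
proof (rule KindepI)
  show "0 \<in> K" "finite (insert x B)" using K B(1) by (simp_all add: subfield_zero)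
  fix c assume cK: "\<forall>v\<in>insert x B. c v \<in> K" and sum: "(\<Sum>v\<in>insert x B. c v *s v) = 0"
  have "x \<notin> B" using x Kspan_superset[OF K B(1)] by blast
  then have sum': "(\<Sum>v\<in>B. c v *s v) = - (c x *s x)"
    using sum B(1) by (simp add: add_eq_0_iff2)
  have cx: "c x = 0"
  proof (rule ccontr)
    assume nz: "c x \<noteq> 0"
    have "(\<Sum>v\<in>B. (- c v / c x) *s v) = (- inverse (c x)) *s (\<Sum>v\<in>B. c v *s v)"
      by (simp add: vec.scale_sum_right divide_inverse ac_simps)
    also have "\<dots> = x" using nz by (simp add: sum' vec_eq_iff)
    finally have "x = (\<Sum>v\<in>B. (- c v / c x) *s v)" ..
    moreover have "\<forall>v\<in>B. - c v / c x \<in> K"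
      using cK K by (simp add: subfield_divide subfield_uminus)
    ultimately have "x \<in> Kspan K B" by (rule KspanI)
    with x show False ..
  qed
  then have "(\<Sum>v\<in>B. c v *s v) = 0" using sum' by simp
  moreover have "\<forall>v\<in>B. c v \<in> K" using cK by simp
  ultimately have "\<forall>v\<in>B. c v = 0" using KindepD[OF B(2,1)] by blast
  with cx show "\<forall>v\<in>insert x B. c v = 0" by simp
qed

lemma Kdim_attained:
  fixes X :: "('a::{field,finite} ^ 'k) set"
  obtains B where "B \<subseteq> X" "Kindep K B" "card B = Kdim K X"
proof -
  let ?S = "{B. B \<subseteq> X \<and> Kindep K B}"
  have "{} \<in> ?S" unfolding Kindep_def by simp
  then have "card ` ?S \<noteq> {}" by blast
  then have "Kdim K X \<in> card ` ?S" unfolding Kdim_def by (rule Max_in[rotated]) simp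
  then show ?thesis using that by auto
qed

lemma card_le_Kdim:
  fixes X :: "('a::{field,finite} ^ 'k) set"
  shows "B \<subseteq> X \<Longrightarrow> Kindep K B \<Longrightarrow> card B \<le> Kdim K X"
  unfolding Kdim_def by (rule Max_ge) auto

lemma Kdim_mono:
  fixes X :: "('a::{field,finite} ^ 'k) set"
  assumes "X \<subseteq> Y"
  shows "Kdim K X \<le> Kdim K Y"
proof -
  obtain B where "B \<subseteq> X" "Kindep K B" "card B = Kdim K X" by (rule Kdim_attained)
  then show ?thesis using assms card_le_Kdim[of B Y K] by simp
qed

lemma Kbasis_exists:
  fixes X :: "('a::{field,finite} ^ 'k) set"
  assumes K: "is_subfield K" and X: "Ksubspace K X"
  obtains B where "Kindep K B" "card B = Kdim K X" "Kspan K B = X"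
proof -
  obtain B where B: "B \<subseteq> X" "Kindep K B" "card B = Kdim K X" by (rule Kdim_attained)
  have "X \<subseteq> Kspan K B"
  proof
    fix x assume "x \<in> X"
    show "x \<in> Kspan K B"
    proof (rule ccontr)
      assume x: "x \<notin> Kspan K B"
      moreover have "B \<subseteq> Kspan K B" by (rule Kspan_superset[OF K]) simp
      ultimately have "x \<notin> B" by blast
      have "Kindep K (insert x B)" by (rule Kindep_insert[OF K _ B(2) x]) simp
      then have "card (insert x B) \<le> Kdim K X"
        by (rule card_le_Kdim[rotated]) (use \<open>x \<in> X\<close> B(1) in auto)
      with \<open>x \<notin> B\<close> B(3) show False by simp
    qed
  qed
  with Kspan_subset[OF X B(1)] have "Kspan K B = X" by blast
  with B(2,3) show ?thesis by (rule that)
qed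

lemma card_Ksubspace:
  fixes X :: "('a::{field,finite} ^ 'k) set"
  assumes K: "is_subfield K" and X: "Ksubspace K X"
  shows "card X = card K ^ Kdim K X"
proof -
  obtain B where B: "Kindep K B" "card B = Kdim K X" "Kspan K B = X" by (rule Kbasis_exists[OF K X])
  then have "card X = card (B \<rightarrow>\<^sub>E K)"
    unfolding Kspan_def using inj_on_Kcombination[OF K _ B(1)] by (auto simp: card_image)
  also have "\<dots> = card K ^ Kdim K X" using B(2) by (simp add: card_PiE)
  finally show ?thesis .
qed

lemma Kdim_le_iff_card_le:
  fixes X Y :: "('a::{field,finite} ^ 'k) set"
  assumes "is_subfield K" "Ksubspace K X" "Ksubspace K Y"
  shows "Kdim K X \<le> Kdim K Y \<longleftrightarrow> card X \<le> card Y"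
  using assms card_subfield_ge_two[OF assms(1)] by (simp add: card_Ksubspace)

lemma Kindep_UNIV_iff:
  fixes B :: "('a::{field,finite} ^ 'k) set"
  shows "Kindep UNIV B \<longleftrightarrow> vec.independent B"
proof
  show "Kindep UNIV B \<Longrightarrow> vec.independent B"
    unfolding vec.independent_explicit using KindepD[of UNIV B] by auto
  show "vec.independent B \<Longrightarrow> Kindep UNIV B"
    unfolding vec.independent_explicit by (intro KindepI) auto
qed

lemma Kdim_UNIV:
  fixes S :: "('a::{field,finite} ^ 'k) set"
  shows "Kdim UNIV S = vec.dim S"
proof (rule antisym)
  obtain B where "B \<subseteq> S" "Kindep UNIV B" "card B = Kdim UNIV S" by (rule Kdim_attained)
  then show "Kdim UNIV S \<le> vec.dim S"
    using vec.independent_card_le_dim by (metis Kindep_UNIV_iff)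
next
  obtain B where "B \<subseteq> S" "vec.independent B" "card B = vec.dim S"
    by (metis vec.basis_exists)
  then show "vec.dim S \<le> Kdim UNIV S"
    by (metis card_le_Kdim Kindep_UNIV_iff)
qed

lemma card_subspace:
  fixes S :: "('a::{field,finite} ^ 'k) set"
  assumes "vec.subspace S"
  shows "card S = CARD('a) ^ vec.dim S"
proof -
  have "is_subfield (UNIV :: 'a set)" unfolding is_subfield_def by simp
  then show ?thesis
    using card_Ksubspace subspace_imp_Ksubspace[OF assms] by (metis Kdim_UNIV)
qed

lemma Kdim_subspace:
  fixes S :: "('a::{field,finite} ^ 'k) set"
  assumes K: "is_subfield K" and q: "CARD('a) = card K ^ m" and S: "vec.subspace S"
  shows "Kdim K S = m * vec.dim S"
proof -
  have "card K ^ Kdim K S = card K ^ (m * vec.dim S)"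
    using card_Ksubspace[OF K subspace_imp_Ksubspace[OF S]] card_subspace[OF S] q
    by (simp add: power_mult)
  then show ?thesis using card_subfield_ge_two[OF K] by simp
qed

text \<open>The map \<open>(a, b) \<mapsto> (a - a', a + b)\<close>, where \<open>a' \<in> A\<close> is a fixed choice depending
  only on \<open>a + b\<close> with \<open>a + b - a' \<in> B\<close>, is injective from \<open>A \<times> B\<close> into \<open>(A \<inter> B) \<times> S\<close>.\<close>

lemma card_mult_le_card_Int_mult:
  fixes A B S :: "'g::ab_group_add set"
  assumes A: "\<And>x y. x \<in> A \<Longrightarrow> y \<in> A \<Longrightarrow> x - y \<in> A"
    and B: "\<And>x y. x \<in> B \<Longrightarrow> y \<in> B \<Longrightarrow> x - y \<in> B"
    and S: "\<And>a b. a \<in> A \<Longrightarrow> b \<in> B \<Longrightarrow> a + b \<in> S"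
    and fin: "finite S" "finite (A \<inter> B)"
  shows "card A * card B \<le> card (A \<inter> B) * card S"
proof -
  define a' where "a' s = (SOME a. a \<in> A \<and> s - a \<in> B)" for s
  have a': "a' (a + b) \<in> A \<and> (a + b) - a' (a + b) \<in> B" if "a \<in> A" "b \<in> B" for a b
    unfolding a'_def by (rule someI[of _ a]) (use that in simp)
  define f where "f p = (fst p - a' (fst p + snd p), fst p + snd p)" for p
  have "inj_on f (A \<times> B)"
    by (rule inj_onI) (auto simp: f_def algebra_simps)
  moreover have "f (a, b) \<in> (A \<inter> B) \<times> S" if ab: "a \<in> A" "b \<in> B" for a b
  proof -
    have "a - a' (a + b) = ((a + b) - a' (a + b)) - b" by (simp add: algebra_simps)
    then have "a - a' (a + b) \<in> B" using B a'[OF ab] ab(2) by metis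
    moreover have "a - a' (a + b) \<in> A" using A a'[OF ab] ab(1) by blast
    ultimately show ?thesis using S[OF ab] unfolding f_def by simp
  qed
  then have "f ` (A \<times> B) \<subseteq> (A \<inter> B) \<times> S" by (auto simp: image_subset_iff)
  ultimately have "card (A \<times> B) \<le> card ((A \<inter> B) \<times> S)"
    using fin by (intro card_inj_on_le) auto
  then show ?thesis by (simp add: card_cartesian_product)
qed

lemma Kdim_add_le_Kdim_Int_add:
  fixes A B S :: "('a::{field,finite} ^ 'k) set"
  assumes K: "is_subfield K" and A: "Ksubspace K A" and B: "Ksubspace K B" and S: "Ksubspace K S"
    and AB: "\<And>a b. a \<in> A \<Longrightarrow> b \<in> B \<Longrightarrow> a + b \<in> S"
  shows "Kdim K A + Kdim K B \<le> Kdim K (A \<inter> B) + Kdim K S"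
proof -
  have "card A * card B \<le> card (A \<inter> B) * card S"
    by (rule card_mult_le_card_Int_mult) (use Ksubspace_diff[OF K] A B AB in auto)
  then have "card K ^ (Kdim K A + Kdim K B) \<le> card K ^ (Kdim K (A \<inter> B) + Kdim K S)"
    by (simp only: power_add card_Ksubspace[OF K A] card_Ksubspace[OF K B] card_Ksubspace[OF K S]
        card_Ksubspace[OF K Ksubspace_Int[OF A B]])
  then show ?thesis using card_subfield_ge_two[OF K] by simp
qed

lemma Ksubspace_scale_preimage:
  assumes H: "vec.subspace H" and V: "Ksubspace K V"
  shows "Ksubspace K {x\<in>H. \<forall>i\<in>I. g i *s x \<in> V}"
  unfolding Ksubspace_def
proof (intro conjI ballI)
  show "0 \<in> {x\<in>H. \<forall>i\<in>I. g i *s x \<in> V}"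
    using V vec.subspace_0[OF H] by (simp add: Ksubspace_def)
next
  fix x y assume "x \<in> {x\<in>H. \<forall>i\<in>I. g i *s x \<in> V}" "y \<in> {x\<in>H. \<forall>i\<in>I. g i *s x \<in> V}"
  then show "x + y \<in> {x\<in>H. \<forall>i\<in>I. g i *s x \<in> V}"
    using V vec.subspace_add[OF H] by (simp add: Ksubspace_def vec.scale_right_distrib)
next
  fix c x assume c: "c \<in> K" and x: "x \<in> {x\<in>H. \<forall>i\<in>I. g i *s x \<in> V}"
  have "g i *s (c *s x) \<in> V" if "i \<in> I" for i
  proof -
    have "c *s (g i *s x) \<in> V" using V c x that unfolding Ksubspace_def by blast
    then show ?thesis by (simp add: mult.commute)
  qed
  then show "c *s x \<in> {x\<in>H. \<forall>i\<in>I. g i *s x \<in> V}"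
    using x vec.subspace_scale[OF H] by simp
qed

lemma Kdim_le_Kdim_scale_preimage:
  fixes H V :: "('a::{field,finite} ^ 'k) set"
  assumes K: "is_subfield K" and H: "vec.subspace H" and V: "Ksubspace K V" "V \<subseteq> H"
  shows "Kdim K V \<le> Kdim K {x\<in>H. a *s x \<in> V}"
proof (cases "a = 0")
  case True
  then have "{x\<in>H. a *s x \<in> V} = H" using V(1) unfolding Ksubspace_def by auto
  then show ?thesis using Kdim_mono[OF V(2)] by simp
next
  case False
  have "inj_on (\<lambda>v. inverse a *s v) V" by (rule inj_onI) (use False in simp)
  moreover have "(\<lambda>v. inverse a *s v) ` V \<subseteq> {x\<in>H. a *s x \<in> V}"
    using False V(2) vec.subspace_scale[OF H] by auto
  ultimately have "card V \<le> card {x\<in>H. a *s x \<in> V}" by (intro card_inj_on_le) auto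
  moreover have "Ksubspace K {x\<in>H. a *s x \<in> V}"
    using Ksubspace_scale_preimage[OF H V(1), of "{a}" id] by simp
  ultimately show ?thesis using Kdim_le_iff_card_le[OF K V(1)] by blast
qed

lemma Kdim_scale_preimage_ge:
  fixes H V :: "('a::{field,finite} ^ 'k) set"
  assumes K: "is_subfield K" and H: "vec.subspace H" and V: "Ksubspace K V" "V \<subseteq> H"
    and I: "finite I"
  shows "Kdim K H + card I * Kdim K V \<le> Kdim K {x\<in>H. \<forall>i\<in>I. g i *s x \<in> V} + card I * Kdim K H"
  using I
proof (induction I rule: finite_induct)
  case empty
  show ?case by simp
next
  case (insert j I)
  let ?A = "{x\<in>H. \<forall>i\<in>I. g i *s x \<in> V}"
  let ?B = "{x\<in>H. g j *s x \<in> V}"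
  have "{x\<in>H. \<forall>i\<in>insert j I. g i *s x \<in> V} = ?A \<inter> ?B" by auto
  moreover have "Ksubspace K ?B" using Ksubspace_scale_preimage[OF H V(1), of "{j}" g] by simp
  then have "Kdim K ?A + Kdim K ?B \<le> Kdim K (?A \<inter> ?B) + Kdim K H"
    by (intro Kdim_add_le_Kdim_Int_add[OF K Ksubspace_scale_preimage[OF H V(1)] _
          subspace_imp_Ksubspace[OF H]])
       (simp_all add: vec.subspace_add[OF H])
  moreover have "Kdim K V \<le> Kdim K ?B" by (rule Kdim_le_Kdim_scale_preimage[OF K H V])
  ultimately show ?case using insert by simp
qed

text \<open>The field \<open>'a\<close> is identified with \<open>'a\<^sup>1\<close> to reuse the \<open>K\<close>-linear algebra of vectors.\<close>

lemma subfield_spanning_set: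
  fixes K :: "'a::{field,finite} set"
  assumes K: "is_subfield K" and q: "CARD('a) = card K ^ m"
  obtains E where "card E = m" "\<And>a. \<exists>d. (\<forall>e\<in>E. d e \<in> K) \<and> a = (\<Sum>e\<in>E. d e * e)"
proof -
  let ?UNIV1 = "UNIV :: ('a ^ 1) set"
  have KU: "Ksubspace K ?UNIV1" unfolding Ksubspace_def by simp
  obtain B where B: "Kindep K B" "card B = Kdim K ?UNIV1" "Kspan K B = ?UNIV1"
    by (rule Kbasis_exists[OF K KU])
  have "card K ^ Kdim K ?UNIV1 = card K ^ m" using card_Ksubspace[OF K KU] q by simp
  then have "card B = m" using B(2) card_subfield_ge_two[OF K] by simp
  define E where "E = (\<lambda>v. v $ 1) ` B"
  have eta: "(\<chi> i. v $ 1) = v" for v :: "'a ^ 1" by (simp add: vec_eq_iff)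
  then have inj: "inj (\<lambda>v :: 'a ^ 1. v $ 1)" by (metis injI)
  have "card E = m" unfolding E_def using \<open>card B = m\<close> card_image[OF inj_on_subset[OF inj]] by simp
  moreover have "\<exists>d. (\<forall>e\<in>E. d e \<in> K) \<and> a = (\<Sum>e\<in>E. d e * e)" for a
  proof -
    have "(\<chi> i. a) \<in> Kspan K B" using B(3) by simp
    then obtain c where c: "\<forall>v\<in>B. c v \<in> K" "(\<chi> i. a) = (\<Sum>v\<in>B. c v *s v)"
      unfolding Kspan_iff by blast
    have "a = (\<Sum>v\<in>B. c v * v $ 1)" using arg_cong[OF c(2), of "\<lambda>v. v $ 1"] by simp
    also have "\<dots> = (\<Sum>e\<in>E. c (\<chi> i. e) * e)"
      unfolding E_def by (simp add: sum.reindex[OF inj_on_subset[OF inj]] eta)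
    finally show ?thesis using c(1) unfolding E_def by (intro exI[of _ "\<lambda>e. c (\<chi> i. e)"]) (auto simp: eta)
  qed
  ultimately show ?thesis by (rule that)
qed

lemma exists_large_subspace_in_Ksubspace:
  fixes H V :: "('a::{field,finite} ^ 'k) set"
  assumes K: "is_subfield K" and q: "CARD('a) = card K ^ m"
    and H: "vec.subspace H" and V: "Ksubspace K V" "V \<subseteq> H"
  obtains M where "vec.subspace M" "M \<subseteq> V" "Kdim K H \<le> Kdim K M + m * (Kdim K H - Kdim K V)"
proof -
  obtain E where E: "card E = m" "\<And>a. \<exists>d. (\<forall>e\<in>E. d e \<in> K) \<and> a = (\<Sum>e\<in>E. d e * e)"
    using subfield_spanning_set[OF K q] by blast
  define M where "M = {x\<in>H. \<forall>e\<in>E. e *s x \<in> V}"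
  have scale: "a *s x \<in> V" if "x \<in> M" for a x
  proof -
    obtain d where d: "\<forall>e\<in>E. d e \<in> K" "a = (\<Sum>e\<in>E. d e * e)" using E(2) by blast
    have "a *s x = (\<Sum>e\<in>E. d e *s (e *s x))" unfolding d(2) by (simp add: vec.scale_sum_left)
    also have "\<dots> \<in> V" using d(1) that unfolding M_def by (intro Ksubspace_sum[OF V(1)]) auto
    finally show ?thesis .
  qed
  have "vec.subspace M"
  proof (rule vec.subspaceI)
    show "0 \<in> M" using V(1) vec.subspace_0[OF H] unfolding M_def Ksubspace_def by simp
    show "x + y \<in> M" if "x \<in> M" "y \<in> M" for x y
      using that scale[OF that(1)] scale[OF that(2)] V(1) vec.subspace_add[OF H]
      unfolding M_def Ksubspace_def by (simp add: vec.scale_right_distrib)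
    show "c *s x \<in> M" if "x \<in> M" for c x
      using that scale[OF that] vec.subspace_scale[OF H] unfolding M_def by simp
  qed
  moreover have "M \<subseteq> V" using scale[of _ 1] by auto
  moreover have "Kdim K H \<le> Kdim K M + m * (Kdim K H - Kdim K V)"
  proof -
    have "Kdim K H + m * Kdim K V \<le> Kdim K M + m * Kdim K H"
      using Kdim_scale_preimage_ge[OF K H V, of E id] E(1) unfolding M_def by simp
    moreover have "m * Kdim K V \<le> m * Kdim K H" using Kdim_mono[OF V(2)] by simp
    ultimately show ?thesis by (simp add: diff_mult_distrib2)
  qed
  ultimately show ?thesis by (rule that)
qed

definition Kadjoin :: "'a::field set \<Rightarrow> ('a ^ 'k) set \<Rightarrow> 'a ^ 'k \<Rightarrow> ('a ^ 'k) set" where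
  "Kadjoin K V x = (\<lambda>(c, v). c *s x + v) ` (K \<times> V)"

lemma mem_Kadjoin_iff: "y \<in> Kadjoin K V x \<longleftrightarrow> (\<exists>c\<in>K. \<exists>v\<in>V. y = c *s x + v)"
  unfolding Kadjoin_def by auto

lemma Ksubspace_Kadjoin:
  assumes K: "is_subfield K" and V: "Ksubspace K V"
  shows "Ksubspace K (Kadjoin K V x)"
  unfolding Ksubspace_def
proof (intro conjI ballI)
  have "0 = 0 *s x + 0" by simp
  then show "0 \<in> Kadjoin K V x"
    using K V unfolding mem_Kadjoin_iff Ksubspace_def by (blast intro: subfield_zero)
next
  fix y z assume "y \<in> Kadjoin K V x" "z \<in> Kadjoin K V x"
  then obtain c v d w where cv: "c \<in> K" "v \<in> V" "y = c *s x + v"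
    and dw: "d \<in> K" "w \<in> V" "z = d *s x + w"
    unfolding mem_Kadjoin_iff by blast
  then have "y + z = (c + d) *s x + (v + w)" by (simp add: vec.scale_left_distrib)
  moreover have "c + d \<in> K" "v + w \<in> V"
    using cv dw K V by (simp_all add: subfield_add Ksubspace_add)
  ultimately show "y + z \<in> Kadjoin K V x" unfolding mem_Kadjoin_iff by blast
next
  fix e y assume e: "e \<in> K" and "y \<in> Kadjoin K V x"
  then obtain c v where cv: "c \<in> K" "v \<in> V" "y = c *s x + v" unfolding mem_Kadjoin_iff by blast
  then have "e *s y = (e * c) *s x + e *s v" by (simp add: vec.scale_right_distrib)
  moreover have "e * c \<in> K" "e *s v \<in> V"
    using cv e K V by (simp_all add: subfield_mult Ksubspace_def)
  ultimately show "e *s y \<in> Kadjoin K V x" unfolding mem_Kadjoin_iff by blast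
qed

lemma card_Kadjoin:
  assumes K: "is_subfield K" and V: "Ksubspace K V" and x: "x \<notin> V"
  shows "card (Kadjoin K V x) = card K * card V"
proof -
  have "inj_on (\<lambda>(c, v). c *s x + v) (K \<times> V)"
  proof (rule inj_onI, clarify)
    fix c v c' v' assume cv: "c \<in> K" "v \<in> V" "c' \<in> K" "v' \<in> V" and eq: "c *s x + v = c' *s x + v'"
    have "c = c'"
    proof (rule ccontr)
      assume "c \<noteq> c'"
      then have "x = inverse (c - c') *s ((c - c') *s x)" by (simp del: vector_sub_rdistrib)
      also have "(c - c') *s x = v' - v"
        using eq by (simp add: vec.scale_left_diff_distrib algebra_simps)
      finally have "x = inverse (c - c') *s (v' - v)" .
      moreover have "inverse (c - c') \<in> K" "v' - v \<in> V"
        using cv K V by (simp_all add: subfield_diff subfield_divide subfield_one inverse_eq_divide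
            Ksubspace_diff)
      ultimately have "x \<in> V" using V unfolding Ksubspace_def by blast
      with x show False ..
    qed
    with eq show "c = c' \<and> v = v'" by simp
  qed
  then show ?thesis unfolding Kadjoin_def by (simp add: card_image card_cartesian_product)
qed

lemma Ksubspace_extend:
  fixes V H :: "('a::{field,finite} ^ 'k) set"
  assumes K: "is_subfield K" and V: "Ksubspace K V" and H: "Ksubspace K H" and VH: "V \<subset> H"
  obtains V' where "Ksubspace K V'" "V \<subseteq> V'" "V' \<subseteq> H" "Kdim K V' = Suc (Kdim K V)"
proof -
  obtain x where x: "x \<in> H" "x \<notin> V" using VH by blast
  have KV': "Ksubspace K (Kadjoin K V x)" by (rule Ksubspace_Kadjoin[OF K V])
  have "V \<subseteq> Kadjoin K V x"
  proof
    fix v assume "v \<in> V"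
    moreover have "v = 0 *s x + v" by simp
    ultimately show "v \<in> Kadjoin K V x" unfolding mem_Kadjoin_iff using subfield_zero[OF K] by blast
  qed
  moreover have "Kadjoin K V x \<subseteq> H"
    using H x(1) VH unfolding Ksubspace_def by (auto simp: mem_Kadjoin_iff) (meson subsetD)
  moreover have "card K ^ Kdim K (Kadjoin K V x) = card K ^ Suc (Kdim K V)"
    using card_Kadjoin[OF K V x(2)] card_Ksubspace[OF K V] card_Ksubspace[OF K KV'] by simp
  then have "Kdim K (Kadjoin K V x) = Suc (Kdim K V)"
    using card_subfield_ge_two[OF K] by (simp del: power_Suc)
  ultimately show ?thesis using KV' that by blast
qed

lemma exists_Ksubspace_between:
  fixes W H :: "('a::{field,finite} ^ 'k) set"
  assumes K: "is_subfield K" and W: "Ksubspace K W" and H: "Ksubspace K H" "W \<subseteq> H"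
    and d: "Kdim K W \<le> d" "d \<le> Kdim K H"
  obtains V where "Ksubspace K V" "W \<subseteq> V" "V \<subseteq> H" "Kdim K V = d"
proof -
  have "\<exists>V. Ksubspace K V \<and> W \<subseteq> V \<and> V \<subseteq> H \<and> Kdim K V = d"
    using d
  proof (induction d)
    case 0
    then show ?case using W H(2) by auto
  next
    case (Suc d)
    show ?case
    proof (cases "Kdim K W = Suc d")
      case True
      then show ?thesis using W H(2) by auto
    next
      case False
      with Suc obtain V where V: "Ksubspace K V" "W \<subseteq> V" "V \<subseteq> H" "Kdim K V = d" by auto
      with Suc.prems have "V \<subset> H" by auto
      then obtain V' where "Ksubspace K V'" "V \<subseteq> V'" "V' \<subseteq> H" "Kdim K V' = Suc d"
        using Ksubspace_extend[OF K V(1) H(1)] V(4) by metis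
      with V(2) show ?thesis by blast
    qed
  qed
  then show ?thesis using that by blast
qed

lemma exists_subspace_meeting_Ksubspace:
  fixes W H :: "('a::{field,finite} ^ 'k) set"
  assumes K: "is_subfield K" and q: "CARD('a) = card K ^ m"
    and H: "vec.subspace H" "vec.dim H = 2 * h" and W: "Ksubspace K W" "W \<subseteq> H"
    and dimW: "r + h * m \<le> Kdim K W" and r: "r < h * m" and h: "0 < h"
  obtains H' where "vec.subspace H'" "H' \<subseteq> H" "vec.dim H' = h" "r < Kdim K (W \<inter> H')"
proof -
  have "0 < m" using r by (cases m) auto
  then have hm: "h \<le> h * m" by simp
  have KH: "Ksubspace K H" by (rule subspace_imp_Ksubspace[OF H(1)])
  have dimH: "Kdim K H = 2 * (h * m)" using Kdim_subspace[OF K q H(1)] H(2) by simp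
  define d where "d = max (Kdim K W) (2 * (h * m) - h)"
  have "Kdim K W \<le> Kdim K H" by (rule Kdim_mono[OF W(2)])
  then obtain V where V: "Ksubspace K V" "W \<subseteq> V" "V \<subseteq> H" "Kdim K V = d"
    using exists_Ksubspace_between[OF K W(1) KH W(2), of d] dimH unfolding d_def by auto
  obtain M where M: "vec.subspace M" "M \<subseteq> V" "Kdim K H \<le> Kdim K M + m * (Kdim K H - Kdim K V)"
    using exists_large_subspace_in_Ksubspace[OF K q H(1) V(1) V(3)] by blast
  have "Kdim K H - Kdim K V \<le> h" using dimH V(4) unfolding d_def by simp
  then have "m * (Kdim K H - Kdim K V) \<le> m * h" by simp
  then have "2 * (h * m) \<le> m * vec.dim M + m * h"
    using M(3) dimH Kdim_subspace[OF K q M(1)] by linarith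
  then have "m * (2 * h) \<le> m * (vec.dim M + h)" by (simp add: algebra_simps)
  then have "h \<le> vec.dim M" using \<open>0 < m\<close> by simp
  then obtain H' where H': "vec.subspace H'" "H' \<subseteq> M" "vec.dim H' = h"
    using vec.choose_subspace_of_subspace[of h M] M(1) by (metis vec.span_eq_iff)
  have dimH': "Kdim K H' = h * m" using Kdim_subspace[OF K q H'(1)] H'(3) by simp
  have "Kdim K W + Kdim K H' \<le> Kdim K (W \<inter> H') + Kdim K V"
    by (rule Kdim_add_le_Kdim_Int_add[OF K W(1) subspace_imp_Ksubspace[OF H'(1)] V(1)])
       (use V(2) H'(2) M(2) in \<open>blast intro: Ksubspace_add[OF V(1)]\<close>)
  then have "r < Kdim K (W \<inter> H')"
    using dimW dimH' V(4) hm h r unfolding d_def max_def by (split if_split_asm) linarith+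
  then show ?thesis using H' M(2) V(3) that by blast
qed

theorem proposition3p2:
  fixes K :: "'a::{field,finite} set" and U :: "('a ^ 'k) set"
    and q m n k h r :: nat
  assumes q: "is_prime_power q"
    and K: "is_subfield K" "card K = q"
    and Fqm: "CARD('a) = q ^ m"
    and dimk: "CARD('k) = k"
    and pos: "k > 0" "m > 0" "n > 0" "h > 0" "r > 0"
    and hk: "h < k"
    and sys: "is_system K n U"
    and ev: "evasive K h r U"
    and rhm: "r < h * m"
  shows "\<forall>H. vec.subspace H \<longrightarrow> vec.dim H = 2 * h \<longrightarrow> Kdim K (U \<inter> H) \<le> r + h * m - 1"
proof (intro allI impI)
  fix H :: "('a ^ 'k) set"
  assume H: "vec.subspace H" "vec.dim H = 2 * h"
  have KU: "Ksubspace K U" using sys unfolding is_system_def by simp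
  have KW: "Ksubspace K (U \<inter> H)" by (rule Ksubspace_Int[OF KU subspace_imp_Ksubspace[OF H(1)]])
  show "Kdim K (U \<inter> H) \<le> r + h * m - 1"
  proof (rule ccontr)
    assume "\<not> Kdim K (U \<inter> H) \<le> r + h * m - 1"
    then have "r + h * m \<le> Kdim K (U \<inter> H)" by simp
    then obtain H' where H': "vec.subspace H'" "H' \<subseteq> H" "vec.dim H' = h" "r < Kdim K (U \<inter> H \<inter> H')"
      using exists_subspace_meeting_Ksubspace[OF K(1) _ H KW _ _ rhm pos(4)] Fqm K(2) by blast
    moreover have "U \<inter> H \<inter> H' = U \<inter> H'" using H'(2) by blast
    moreover have "Kdim K (U \<inter> H') \<le> r" using ev H'(1,3) unfolding evasive_def by blast
    ultimately show False by simp
  qed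
qed

end
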